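(* Let $L(\mathbf x,\dot{\mathbf x},t)=-mc^2\sqrt{1-\dot{\mathbf x}^2/c^2}-q\big[A^0(t,\mathbf x)-\mathbf A(t,\mathbf x)\cdot\dot{\mathbf x}/c\big]$ and let $\mathbf Q(\mathbf x,\dot{\mathbf x},t)$ be an additional force. Define $$\hat{\mathcal L}(\hat{\mathbf x},\hat{\mathbf x}',\xi):=(1+\hat z')\,L\Big(\hat{\mathbf x},\frac{c\hat{\mathbf x}'}{1+\hat z'},\frac{\xi+\hat z}{c}\Big),$$ $$\hat{\mathbf Q}^{\perp}(\hat{\mathbf x},\hat{\mathbf x}',\xi):=(1+\hat z')\,\mathbf Q^{\perp}\Big(\hat{\mathbf x},\frac{c\hat{\mathbf x}'}{1+\hat z'},\frac{\xi+\hat z}{c}\Big),\qquad \hat Q^z(\hat{\mathbf x},\hat{\mathbf x}',\xi):=\Big[Q^z-\hat{\mathbf x}^{\perp}{}'\cdot\mathbf Q^{\perp}\Big]\Big(\hat{\mathbf x},\frac{c\hat{\mathbf x}'}{1+\hat z'},\frac{\xi+\hat z}{c}\Big).$$ Then a motion $\mathbf x(t)$ with $|\dot{\mathbf x}|<c$ satisfies the Lagrange equations $$\frac{d}{dt}\frac{\partial L}{\partial\dot{\mathbf x}}-\frac{\partial L}{\partial\mathbf x}=\mathbf Q$$ if and only if its reparametrization $\hat{\mathbf x}(\xi)$ by $\xi=ct-z$ satisfies $$\frac{d}{d\xi}\frac{\partial\hat{\mathcal L}}{\partial\hat{\mathbf x}'}-\frac{\partial\hat{\mathcal L}}{\partial\hat{\mathbf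 x}}=\hat{\mathbf Q}.$$
   Context: A particle of rest mass $m>0$ and charge $q$ in an external electromagnetic potential $(A^0,\mathbf A)(t,\mathbf x)$. Coordinates $\mathbf x=(x,y,z)$, $\perp$ denotes $(x,y)$-components, dot is $d/dt$. Since $|\dot{\mathbf x}|<c$, $\xi(t)=ct-z(t)$ is strictly increasing; $\hat{\mathbf x}(\xi)$ is defined by $\hat{\mathbf x}(\xi(t))=\mathbf x(t)$, and prime denotes $d/d\xi$ (so that $1+\hat z'>0$ and $d/d\xi=(1+\hat z')\,d/d(ct)$). *)

theory Defs
  imports "HOL-Analysis.Analysis"
begin

text \<open>Vectors in R^3 are real^3; components: v$1 = x, v$2 = y, v$3 = z.
  A Lagrangian / generalized force is a function of (position, velocity, time).\<close>

type_synonym vec3 = "real ^ 3"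

definition grad_pos :: "(vec3 \<Rightarrow> vec3 \<Rightarrow> real \<Rightarrow> real) \<Rightarrow> vec3 \<Rightarrow> vec3 \<Rightarrow> real \<Rightarrow> vec3" where
  "grad_pos L x v t = (\<chi> i. deriv (\<lambda>s. L (x + s *\<^sub>R axis i 1) v t) 0)"

definition grad_vel :: "(vec3 \<Rightarrow> vec3 \<Rightarrow> real \<Rightarrow> real) \<Rightarrow> vec3 \<Rightarrow> vec3 \<Rightarrow> real \<Rightarrow> vec3" where
  "grad_vel L x v t = (\<chi> i. deriv (\<lambda>s. L x (v + s *\<^sub>R axis i 1) t) 0)"

definition lagrange_eqs ::
  "(vec3 \<Rightarrow> vec3 \<Rightarrow> real \<Rightarrow> real) \<Rightarrow> (vec3 \<Rightarrow> vec3 \<Rightarrow> real \<Rightarrow> vec3) \<Rightarrow> (real \<Rightarrow> vec3) \<Rightarrow> real set \<Rightarrow> bool" where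
  "lagrange_eqs L Q X S \<longleftrightarrow>
     (\<forall>s\<in>S. ((\<lambda>r. grad_vel L (X r) (vector_derivative X (at r)) r) has_vector_derivative
              (Q (X s) (vector_derivative X (at s)) s + grad_pos L (X s) (vector_derivative X (at s)) s)) (at s))"

definition Lag :: "real \<Rightarrow> real \<Rightarrow> real \<Rightarrow> (real \<times> vec3 \<Rightarrow> real) \<Rightarrow> (real \<times> vec3 \<Rightarrow> vec3)
                    \<Rightarrow> vec3 \<Rightarrow> vec3 \<Rightarrow> real \<Rightarrow> real" where
  "Lag m q c A0 A x v t = - m * c\<^sup>2 * sqrt (1 - (v \<bullet> v) / c\<^sup>2) - q * (A0 (t, x) - A (t, x) \<bullet> v / c)"

definition Lhat :: "real \<Rightarrow> (vec3 \<Rightarrow> vec3 \<Rightarrow> real \<Rightarrow> real) \<Rightarrow> vec3 \<Rightarrow> vec3 \<Rightarrow> real \<Rightarrow> real" where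
  "Lhat c L xh xh' \<xi> = (1 + xh' $ 3) * L xh ((c / (1 + xh' $ 3)) *\<^sub>R xh') ((\<xi> + xh $ 3) / c)"

definition Qhat :: "real \<Rightarrow> (vec3 \<Rightarrow> vec3 \<Rightarrow> real \<Rightarrow> vec3) \<Rightarrow> vec3 \<Rightarrow> vec3 \<Rightarrow> real \<Rightarrow> vec3" where
  "Qhat c Q xh xh' \<xi> =
     (let F = Q xh ((c / (1 + xh' $ 3)) *\<^sub>R xh') ((\<xi> + xh $ 3) / c)
      in (\<chi> i. if i = 3 then F $ 3 - (xh' $ 1 * F $ 1 + xh' $ 2 * F $ 2)
               else (1 + xh' $ 3) * F $ i))"

end

theory Submission
  imports Defs
begin

(* Primes denote d/dt. The light-front time xi = c t - z(t) has d xi/dt = c - z' > 0, so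
   d/d xi = (c - z')^-1 d/dt, and by invariance of domain xi maps T onto an open set. At
   corresponding points the light-front momentum is c p - H e_z, where p is the momentum and
   H = x'.p - L the energy, and the light-front position gradient is
   (1 + dz/d xi) (dL/dx + (dL/dt / c) e_z). Since dH/dt = x'.(p' - dL/dx) - dL/dt along the
   motion, the light-front equations are a triangular linear recombination of the residuals
   r = p' - dL/dx - Q: their transverse part is a multiple of r_perp and their z-component is
   ((c - z') r_z - x'_perp.r_perp)/(c - z'), so both systems vanish together. *)

lemma DERIV_Lagrangian_comp:
  fixes L :: "vec3 \<Rightarrow> vec3 \<Rightarrow> real \<Rightarrow> real"
  assumes L: "((\<lambda>(x,v,t). L x v t) has_derivative DL) (at (fx s, fv s, ft s))"
    and fx: "(fx has_vector_derivative dx) (at s)" and fv: "(fv has_vector_derivative dv) (at s)"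
    and ft: "(ft has_real_derivative dt) (at s)"
  shows "((\<lambda>r. L (fx r) (fv r) (ft r)) has_real_derivative DL (dx, dv, dt)) (at s)"
proof -
  have "((\<lambda>r. (fx r, fv r, ft r)) has_vector_derivative (dx, dv, dt)) (at s)"
    using ft by (intro has_vector_derivative_Pair fx fv)
      (simp add: has_real_derivative_iff_has_vector_derivative)
  then have "((\<lambda>r. (\<lambda>(x,v,t). L x v t) (fx r, fv r, ft r)) has_derivative (\<lambda>h. DL (h *\<^sub>R (dx, dv, dt)))) (at s)"
    unfolding has_vector_derivative_def by (rule has_derivative_compose) (use L in simp)
  moreover have "(\<lambda>h. DL (h *\<^sub>R (dx, dv, dt))) = (*) (DL (dx, dv, dt))"
    using linear_scale[OF has_derivative_linear[OF L]] by (auto simp: fun_eq_iff)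
  ultimately show ?thesis by (simp add: has_field_derivative_def)
qed

lemma grad_vel_by_derivative:
  fixes L :: "vec3 \<Rightarrow> vec3 \<Rightarrow> real \<Rightarrow> real"
  assumes L: "((\<lambda>(x,v,t). L x v t) has_derivative DL) (at (x,v,t))"
  shows "grad_vel L x v t = (\<chi> i. DL (0, axis i 1, 0))"
proof -
  have "deriv (\<lambda>s. L x (v + s *\<^sub>R axis i 1) t) 0 = DL (0, axis i 1, 0)" for i
    by (rule DERIV_imp_deriv, rule DERIV_Lagrangian_comp[where fx="\<lambda>_. x" and ft="\<lambda>_. t"])
      (use L in \<open>auto intro!: derivative_eq_intros\<close>)
  then show ?thesis by (simp add: grad_vel_def)
qed

lemma grad_pos_by_derivative:
  fixes L :: "vec3 \<Rightarrow> vec3 \<Rightarrow> real \<Rightarrow> real"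
  assumes L: "((\<lambda>(x,v,t). L x v t) has_derivative DL) (at (x,v,t))"
  shows "grad_pos L x v t = (\<chi> i. DL (axis i 1, 0, 0))"
proof -
  have "deriv (\<lambda>s. L (x + s *\<^sub>R axis i 1) v t) 0 = DL (axis i 1, 0, 0)" for i
    by (rule DERIV_imp_deriv, rule DERIV_Lagrangian_comp[where fv="\<lambda>_. v" and ft="\<lambda>_. t"])
      (use L in \<open>auto intro!: derivative_eq_intros\<close>)
  then show ?thesis by (simp add: grad_pos_def)
qed

lemma linear_vec3_triple_expansion:
  fixes D :: "vec3 \<times> vec3 \<times> real \<Rightarrow> real"
  assumes "linear D"
  shows "D (hx, hv, ht) = hx \<bullet> (\<chi> i. D (axis i 1, 0, 0)) + hv \<bullet> (\<chi> i. D (0, axis i 1, 0)) + ht * D (0, 0, 1)"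
proof -
  have "(hx, hv, ht) = (\<Sum>i\<in>UNIV. hx$i *\<^sub>R (axis i 1, 0, 0)) + (\<Sum>i\<in>UNIV. hv$i *\<^sub>R (0, axis i 1, 0))
      + ht *\<^sub>R (0::vec3, 0::vec3, 1::real)"
    by (simp add: sum_prod vec_eq_iff axis_def mult.commute[of _ "if _ then _ else _"]
        if_distrib[of "\<lambda>y. y * _"] cong: if_cong)
  then have "D (hx, hv, ht) = (\<Sum>i\<in>UNIV. hx$i * D (axis i 1, 0, 0)) + (\<Sum>i\<in>UNIV. hv$i * D (0, axis i 1, 0))
      + ht * D (0, 0, 1)"
    by (simp only: linear_add[OF assms] linear_sum[OF assms] linear_scale[OF assms] real_scaleR_def)
  then show ?thesis by (simp add: inner_vec_def mult.commute)
qed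

lemma derivative_Lagrangian_expansion:
  fixes L :: "vec3 \<Rightarrow> vec3 \<Rightarrow> real \<Rightarrow> real"
  assumes L: "((\<lambda>(x,v,t). L x v t) has_derivative DL) (at (x,v,t))"
  shows "DL (hx, hv, ht) = hx \<bullet> grad_pos L x v t + hv \<bullet> grad_vel L x v t + ht * DL (0, 0, 1)"
  unfolding grad_pos_by_derivative[OF L] grad_vel_by_derivative[OF L]
  by (rule linear_vec3_triple_expansion[OF has_derivative_linear[OF L]])

lemma grad_vel_Lhat:
  fixes L :: "vec3 \<Rightarrow> vec3 \<Rightarrow> real \<Rightarrow> real"
  assumes L: "((\<lambda>(x,v,t). L x v t) has_derivative DL) (at (y, v, t))"
    and w3: "1 + w$3 > 0" and v: "v = (c / (1 + w$3)) *\<^sub>R w" and t: "t = (s + y$3) / c"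
  shows "grad_vel (Lhat c L) y w s = c *\<^sub>R grad_vel L y v t - (v \<bullet> grad_vel L y v t - L y v t) *\<^sub>R axis 3 1"
proof -
  define p where "p = grad_vel L y v t"
  have "deriv (\<lambda>\<sigma>. Lhat c L y (w + \<sigma> *\<^sub>R axis j 1) s) 0 = c * p$j - (v \<bullet> p - L y v t) * axis 3 1 $ j"
    for j :: 3
  proof -
    define e :: vec3 where "e = axis j 1"
    have e3: "e$3 = axis 3 1 $ j" by (simp add: e_def axis_def eq_commute)
    define g where "g = (\<lambda>\<sigma>. 1 + w$3 + \<sigma> * e$3)"
    define u where "u = (\<lambda>\<sigma>. (c / g \<sigma>) *\<^sub>R (w + \<sigma> *\<^sub>R e))"
    define du where "du = (c / g 0) *\<^sub>R e - (c * e$3 / (g 0)\<^sup>2) *\<^sub>R w"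
    have u0: "u 0 = v" by (simp add: u_def g_def v)
    have "(u has_vector_derivative du) (at 0)"
      unfolding u_def du_def g_def using w3 by (auto intro!: derivative_eq_intros simp: power2_eq_square)
    then have dL: "((\<lambda>\<sigma>. L y (u \<sigma>) t) has_real_derivative DL (0, du, 0)) (at 0)"
      using L u0 by (intro DERIV_Lagrangian_comp[where L=L and fx="\<lambda>_. y" and ft="\<lambda>_. t"]) simp_all
    have dg: "(g has_real_derivative e$3) (at 0)"
      unfolding g_def by (auto intro!: derivative_eq_intros)
    have "g 0 * (c / g 0) = c" "g 0 * (c * e$3 / (g 0)\<^sup>2) = e$3 * (c / (1 + w$3))"
      using w3 by (simp_all add: g_def power2_eq_square)
    then have gdu: "g 0 *\<^sub>R du = c *\<^sub>R e - e$3 *\<^sub>R v"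
      by (simp add: du_def v scaleR_diff_right)
    have "g 0 * DL (0, du, 0) = (g 0 *\<^sub>R du) \<bullet> p"
      using derivative_Lagrangian_expansion[OF L, of 0 du 0] by (simp add: p_def)
    also have "\<dots> = c * p$j - e$3 * (v \<bullet> p)"
      unfolding gdu by (simp add: e_def inner_diff_left inner_axis')
    finally have "g 0 * DL (0, du, 0) = c * p$j - e$3 * (v \<bullet> p)" .
    then have "e$3 * L y v t + g 0 * DL (0, du, 0) = c * p$j - (v \<bullet> p - L y v t) * axis 3 1 $ j"
      using e3 by (simp add: algebra_simps)
    moreover have "((\<lambda>\<sigma>. g \<sigma> * L y (u \<sigma>) t) has_real_derivative e$3 * L y v t + g 0 * DL (0, du, 0)) (at 0)"
      using DERIV_mult[OF dg dL] u0 by (simp add: mult.commute)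
    moreover have "(\<lambda>\<sigma>. Lhat c L y (w + \<sigma> *\<^sub>R e) s) = (\<lambda>\<sigma>. g \<sigma> * L y (u \<sigma>) t)"
      by (simp add: Lhat_def g_def u_def t fun_eq_iff add.assoc)
    ultimately have "((\<lambda>\<sigma>. Lhat c L y (w + \<sigma> *\<^sub>R e) s) has_real_derivative
        c * p$j - (v \<bullet> p - L y v t) * axis 3 1 $ j) (at 0)"
      by metis
    then show ?thesis
      unfolding e_def by (rule DERIV_imp_deriv)
  qed
  then show ?thesis by (simp add: grad_vel_def vec_eq_iff p_def)
qed

lemma grad_pos_Lhat:
  fixes L :: "vec3 \<Rightarrow> vec3 \<Rightarrow> real \<Rightarrow> real"
  assumes L: "((\<lambda>(x,v,t). L x v t) has_derivative DL) (at (y, v, t))"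
    and v: "v = (c / (1 + w$3)) *\<^sub>R w" and t: "t = (s + y$3) / c" and c: "c \<noteq> 0"
  shows "grad_pos (Lhat c L) y w s = (1 + w$3) *\<^sub>R (grad_pos L y v t + (DL (0, 0, 1) / c) *\<^sub>R axis 3 1)"
proof -
  have "deriv (\<lambda>\<sigma>. Lhat c L (y + \<sigma> *\<^sub>R axis j 1) w s) 0
      = (1 + w$3) * (grad_pos L y v t $ j + DL (0, 0, 1) / c * axis 3 1 $ j)" for j :: 3
  proof -
    define e :: vec3 where "e = axis j 1"
    have e3: "e$3 = axis 3 1 $ j" by (simp add: e_def axis_def eq_commute)
    have "((\<lambda>\<sigma>. y + \<sigma> *\<^sub>R e) has_vector_derivative e) (at 0)"
      by (auto intro!: derivative_eq_intros)
    moreover have "((\<lambda>\<sigma>. (s + y$3 + \<sigma> * e$3) / c) has_real_derivative e$3 / c) (at 0)"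
      using c by (auto intro!: derivative_eq_intros)
    ultimately have "((\<lambda>\<sigma>. L (y + \<sigma> *\<^sub>R e) v ((s + y$3 + \<sigma> * e$3) / c)) has_real_derivative DL (e, 0, e$3 / c))
        (at 0)"
      using L t
      by (intro DERIV_Lagrangian_comp[where L=L and fv="\<lambda>_. v"])
        (simp_all add: has_vector_derivative_const)
    then have "((\<lambda>\<sigma>. (1 + w$3) * L (y + \<sigma> *\<^sub>R e) v ((s + y$3 + \<sigma> * e$3) / c)) has_real_derivative
        (1 + w$3) * DL (e, 0, e$3 / c)) (at 0)"
      by (rule DERIV_cmult)
    moreover have "(\<lambda>\<sigma>. Lhat c L (y + \<sigma> *\<^sub>R e) w s)
        = (\<lambda>\<sigma>. (1 + w$3) * L (y + \<sigma> *\<^sub>R e) v ((s + y$3 + \<sigma> * e$3) / c))"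
      by (simp add: Lhat_def v fun_eq_iff add.assoc)
    moreover have "DL (e, 0, e$3 / c) = grad_pos L y v t $ j + DL (0, 0, 1) / c * axis 3 1 $ j"
      using derivative_Lagrangian_expansion[OF L, of e 0 "e$3 / c"] e3 by (simp add: e_def inner_axis')
    ultimately show ?thesis
      by (intro DERIV_imp_deriv) (simp add: e_def)
  qed
  then show ?thesis by (simp add: grad_pos_def vec_eq_iff)
qed

lemma light_front_force_balance_iff:
  fixes p' F G v :: vec3 and Lt c :: real
  assumes v3: "v$3 < c" and c: "c > 0"
  defines "w \<equiv> (1 / (c - v$3)) *\<^sub>R v"
  shows "p' = F + G \<longleftrightarrow>
    (1 / (c - v$3)) *\<^sub>R (c *\<^sub>R p' - (v \<bullet> (p' - G) - Lt) *\<^sub>R axis 3 1) =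
    (\<chi> i. if i = 3 then F$3 - (w$1 * F$1 + w$2 * F$2) else (1 + w$3) * F$i)
      + (1 + w$3) *\<^sub>R (G + (Lt / c) *\<^sub>R axis 3 1)"
    (is "_ \<longleftrightarrow> ?L = ?R")
proof -
  define k where "k = c - v$3"
  define r where "r = p' - F - G"
  have k: "k > 0" using v3 by (simp add: k_def)
  have w3: "1 + w$3 = c / k"
    using k by (simp add: w_def k_def field_simps)
  have w12: "w$1 = v$1 / k" "w$2 = v$2 / k"
    by (simp_all add: w_def k_def)
  have "?L$i = ?R$i \<longleftrightarrow> r$i = 0" if "i \<noteq> 3" for i
  proof -
    have "?L$i = (c / k) * p'$i" "?R$i = (c / k) * (F$i + G$i)"
      using that by (simp_all add: w3 axis_def k_def algebra_simps add_divide_distrib)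
    then show ?thesis using k c by (simp only: mult_cancel_left) (auto simp: r_def)
  qed
  moreover have "?L$3 = ?R$3 \<longleftrightarrow> k * r$3 - v$1 * r$1 - v$2 * r$2 = 0"
  proof -
    define a where "a = c * p'$3 - v \<bullet> (p' - G) + Lt"
    define b where "b = k * F$3 - v$1 * F$1 - v$2 * F$2 + c * G$3 + Lt"
    have "?L$3 = (c * p'$3 - (v \<bullet> (p' - G) - Lt)) / k"
      by (simp add: k_def)
    also have "\<dots> = a / k" by (simp add: a_def)
    finally have "?L$3 = a / k" .
    have "?R$3 = F$3 - (v$1 / k * F$1 + v$2 / k * F$2) + c / k * (G$3 + Lt / c)"
      using w12 by (simp add: w3)
    also have "\<dots> = b / k"
      using k c by (simp add: b_def field_simps)
    finally have "?R$3 = b / k" .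
    moreover note \<open>?L$3 = a / k\<close>
    moreover have "a - b = k * r$3 - v$1 * r$1 - v$2 * r$2"
      by (simp add: a_def b_def r_def k_def inner_vec_def sum_3 algebra_simps)
    ultimately show ?thesis using k by (simp only: divide_cancel_right) auto
  qed
  ultimately have "?L = ?R \<longleftrightarrow> r$1 = 0 \<and> r$2 = 0 \<and> k * r$3 - v$1 * r$1 - v$2 * r$2 = 0"
    by (simp add: vec_eq_iff forall_3)
  also have "\<dots> \<longleftrightarrow> r = 0"
    using k by (auto simp: vec_eq_iff forall_3)
  finally show ?thesis by (simp add: r_def algebra_simps)
qed

lemma light_front_velocity:
  fixes v :: vec3
  assumes v3: "v$3 < c" and c: "c > 0"
  defines "w \<equiv> (1 / (c - v$3)) *\<^sub>R v"
  shows "1 + w$3 > 0" and "(c / (1 + w$3)) *\<^sub>R w = v"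
proof -
  have "1 + w$3 = c / (c - v$3)"
    using v3 by (simp add: w_def field_simps)
  then show "1 + w$3 > 0" "(c / (1 + w$3)) *\<^sub>R w = v"
    using v3 c by (simp_all add: w_def)
qed

lemma lagrange_eq_iff_light_front_eq:
  fixes L :: "vec3 \<Rightarrow> vec3 \<Rightarrow> real \<Rightarrow> real" and y v p' :: vec3
  assumes L: "((\<lambda>(x,v,t). L x v t) has_derivative DL) (at (y, v, t))"
    and v3: "v$3 < c" and c: "c > 0"
  defines "w \<equiv> (1 / (c - v$3)) *\<^sub>R v" and "s \<equiv> c * t - y$3"
  shows "p' = Q y v t + grad_pos L y v t \<longleftrightarrow>
    (1 / (c - v$3)) *\<^sub>R (c *\<^sub>R p' - (v \<bullet> (p' - grad_pos L y v t) - DL (0, 0, 1)) *\<^sub>R axis 3 1)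
      = Qhat c Q y w s + grad_pos (Lhat c L) y w s"
proof -
  have wv: "(c / (1 + w$3)) *\<^sub>R w = v"
    using light_front_velocity[OF v3 c] by (simp add: w_def)
  have t: "(s + y$3) / c = t"
    using c by (simp add: s_def)
  have "grad_pos (Lhat c L) y w s = (1 + w$3) *\<^sub>R (grad_pos L y v t + (DL (0, 0, 1) / c) *\<^sub>R axis 3 1)"
    using grad_pos_Lhat[OF L[folded wv] refl t[symmetric]] c by (simp add: wv)
  moreover have "Qhat c Q y w s = (let F = Q y v t in
      \<chi> i. if i = 3 then F$3 - (w$1 * F$1 + w$2 * F$2) else (1 + w$3) * F$i)"
    by (simp only: Qhat_def wv t)
  ultimately show ?thesis
    using light_front_force_balance_iff[OF v3 c, of p' "Q y v t" "grad_pos L y v t" "DL (0, 0, 1)"]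
    by (simp only: Let_def w_def)
qed

lemma has_vector_derivative_reparametrize:
  fixes \<xi> :: "real \<Rightarrow> real" and f g :: "real \<Rightarrow> 'a::real_normed_vector"
  assumes T: "open T" and inj: "inj_on \<xi> T"
    and \<xi>: "\<And>s. s \<in> T \<Longrightarrow> (\<xi> has_real_derivative \<xi>' s) (at s)" "\<And>s. s \<in> T \<Longrightarrow> \<xi>' s \<noteq> 0"
    and gf: "\<And>s. s \<in> T \<Longrightarrow> g (\<xi> s) = f s"
    and t: "t \<in> T" and f: "(f has_vector_derivative f') (at t)"
  shows "(g has_vector_derivative (1 / \<xi>' t) *\<^sub>R f') (at (\<xi> t))"
proof -
  define \<tau> where "\<tau> = inv_into T \<xi>"
  have \<tau>\<xi>: "\<tau> (\<xi> s) = s" if "s \<in> T" for s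
    using inj that by (simp add: \<tau>_def)
  have cont: "continuous_on T \<xi>"
    using \<xi>(1) by (meson DERIV_isCont continuous_at_imp_continuous_on)
  have U: "open (\<xi> ` T)"
    by (rule invariance_of_domain_gen[OF T cont inj]) simp
  have "(\<tau> has_derivative (*) (1 / \<xi>' t)) (at (\<xi> t))"
    using \<xi>[OF t] by (intro has_derivative_inverse_strong[OF T t cont \<tau>\<xi>])
      (auto simp: has_field_derivative_def fun_eq_iff)
  then have "((f \<circ> \<tau>) has_vector_derivative (1 / \<xi>' t) *\<^sub>R f') (at (\<xi> t))"
    using f \<tau>\<xi>[OF t]
    by (intro vector_diff_chain_at) (simp_all add: has_real_derivative_iff_has_vector_derivative[symmetric]
        has_field_derivative_def mult.commute)
  then show ?thesis
    by (rule has_vector_derivative_transform_within_open[OF _ U]) (use t gf \<tau>\<xi> in auto)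
qed

lemma has_vector_derivative_light_front:
  fixes x xh :: "real \<Rightarrow> vec3" and f g :: "real \<Rightarrow> 'a::real_normed_vector"
  assumes c: "c > 0" and T: "open T"
    and x: "\<And>s. s \<in> T \<Longrightarrow> (x has_vector_derivative v s) (at s)"
    and v3: "\<And>s. s \<in> T \<Longrightarrow> v s $ 3 < c"
    and xh: "\<And>s. s \<in> T \<Longrightarrow> xh (c * s - x s $ 3) = x s"
    and gf: "\<And>s. s \<in> T \<Longrightarrow> g (c * s - x s $ 3) = f s"
    and t: "t \<in> T" and f: "(f has_vector_derivative f') (at t)"
  shows "(g has_vector_derivative (1 / (c - v t $ 3)) *\<^sub>R f') (at (c * t - x t $ 3))"
proof (rule has_vector_derivative_reparametrize[where \<xi>="\<lambda>s. c * s - x s $ 3", OF T _ _ _ gf t f])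
  show "inj_on (\<lambda>s. c * s - x s $ 3) T"
  proof (rule inj_onI)
    fix s s' assume "s \<in> T" "s' \<in> T" and eq: "c * s - x s $ 3 = c * s' - x s' $ 3"
    then have "x s = x s'" using xh by metis
    then show "s = s'" using eq c by simp
  qed
  show "((\<lambda>s. c * s - x s $ 3) has_real_derivative c - v s $ 3) (at s)" if "s \<in> T" for s
  proof -
    have "((\<lambda>r. x r $ 3) has_real_derivative v s $ 3) (at s)"
      using bounded_linear.has_vector_derivative[OF bounded_linear_vec_nth x[OF that]]
      by (simp add: has_real_derivative_iff_has_vector_derivative)
    then show ?thesis by (auto intro!: derivative_eq_intros)
  qed
  show "c - v s $ 3 \<noteq> 0" if "s \<in> T" for s
    using v3[OF that] by simp
qed

lemma energy_has_real_derivative: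
  fixes L :: "vec3 \<Rightarrow> vec3 \<Rightarrow> real \<Rightarrow> real"
  assumes L: "((\<lambda>(x,v,t). L x v t) has_derivative DL) (at (x t, v t, t))"
    and x: "(x has_vector_derivative v t) (at t)" and v: "(v has_vector_derivative a) (at t)"
    and p: "((\<lambda>r. grad_vel L (x r) (v r) r) has_vector_derivative p') (at t)"
  shows "((\<lambda>r. v r \<bullet> grad_vel L (x r) (v r) r - L (x r) (v r) r) has_real_derivative
           v t \<bullet> (p' - grad_pos L (x t) (v t) t) - DL (0, 0, 1)) (at t)"
proof -
  have "((\<lambda>r. v r \<bullet> grad_vel L (x r) (v r) r) has_real_derivative
      v t \<bullet> p' + a \<bullet> grad_vel L (x t) (v t) t) (at t)"
    using bounded_bilinear.has_vector_derivative[OF bounded_bilinear_inner v p]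
    by (simp add: has_real_derivative_iff_has_vector_derivative)
  moreover have "((\<lambda>r. L (x r) (v r) r) has_real_derivative DL (v t, a, 1)) (at t)"
    using L x v by (intro DERIV_Lagrangian_comp[where L=L and ft="\<lambda>r. r"]) auto
  ultimately show ?thesis
    using derivative_Lagrangian_expansion[OF L, of "v t" a 1]
    by (auto dest: DERIV_diff simp: inner_diff_right algebra_simps)
qed

lemma lagrange_eqs_image_iff:
  assumes "\<And>t. t \<in> S \<Longrightarrow>
    ((\<lambda>r. grad_vel L (X r) (vector_derivative X (at r)) r) has_vector_derivative p' t) (at (f t))"
  shows "lagrange_eqs L Q X (f ` S) \<longleftrightarrow>
    (\<forall>t\<in>S. p' t = Q (X (f t)) (vector_derivative X (at (f t))) (f t)
                  + grad_pos L (X (f t)) (vector_derivative X (at (f t))) (f t))"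
proof -
  have "((\<lambda>r. grad_vel L (X r) (vector_derivative X (at r)) r) has_vector_derivative y) (at (f t))
      \<longleftrightarrow> p' t = y" if "t \<in> S" for t y
    using vector_derivative_unique_at[OF assms[OF that]] assms[OF that] by blast
  then show ?thesis unfolding lagrange_eqs_def by simp
qed

lemma lagrange_eqs_light_front_iff:
  fixes L :: "vec3 \<Rightarrow> vec3 \<Rightarrow> real \<Rightarrow> real" and DL :: "real \<Rightarrow> vec3 \<times> vec3 \<times> real \<Rightarrow> real"
    and x xh :: "real \<Rightarrow> vec3"
  defines "v \<equiv> \<lambda>t. vector_derivative x (at t)"
  assumes c: "c > 0" and T: "open T"
    and x: "\<And>t. t \<in> T \<Longrightarrow> x differentiable (at t)"
    and v: "\<And>t. t \<in> T \<Longrightarrow> v differentiable (at t)"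
    and v3: "\<And>t. t \<in> T \<Longrightarrow> v t $ 3 < c"
    and L: "\<And>t. t \<in> T \<Longrightarrow> ((\<lambda>(x,v,t). L x v t) has_derivative DL t) (at (x t, v t, t))"
    and p: "\<And>t. t \<in> T \<Longrightarrow> (\<lambda>r. grad_vel L (x r) (v r) r) differentiable (at t)"
    and xh: "\<And>t. t \<in> T \<Longrightarrow> xh (c * t - x t $ 3) = x t"
  shows "lagrange_eqs L Q x T \<longleftrightarrow> lagrange_eqs (Lhat c L) (Qhat c Q) xh ((\<lambda>t. c * t - x t $ 3) ` T)"
proof -
  define \<xi> where "\<xi> = (\<lambda>t. c * t - x t $ 3)"
  define w where "w = (\<lambda>t. (1 / (c - v t $ 3)) *\<^sub>R v t)"
  define p where "p = (\<lambda>r. grad_vel L (x r) (v r) r)"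
  define p' where "p' = (\<lambda>t. vector_derivative p (at t))"
  define G where "G = (\<lambda>t. grad_pos L (x t) (v t) t)"
  define H where "H = (\<lambda>r. v r \<bullet> p r - L (x r) (v r) r)"
  define H' where "H' = (\<lambda>t. v t \<bullet> (p' t - G t) - DL t (0, 0, 1))"
  have xd: "(x has_vector_derivative v t) (at t)" if "t \<in> T" for t
    using x[OF that] by (simp add: v_def vector_derivative_works)
  have pd: "(p has_vector_derivative p' t) (at t)" if "t \<in> T" for t
    using p[OF that] by (simp add: p_def p'_def vector_derivative_works)
  have Hd: "(H has_real_derivative H' t) (at t)" if "t \<in> T" for t
    using energy_has_real_derivative[OF L[OF that] xd[OF that] v[OF that, unfolded vector_derivative_works]]
      pd[OF that] by (simp add: H_def H'_def p_def G_def)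
  have light_front: "(g has_vector_derivative (1 / (c - v t $ 3)) *\<^sub>R f') (at (\<xi> t))"
    if "t \<in> T" "\<And>s. s \<in> T \<Longrightarrow> g (\<xi> s) = f s" "(f has_vector_derivative f') (at t)"
    for t and f g :: "real \<Rightarrow> vec3" and f'
    unfolding \<xi>_def
    by (rule has_vector_derivative_light_front[OF c T xd v3 xh]) (use that in \<open>simp_all add: \<xi>_def\<close>)
  have xh_\<xi>: "xh (\<xi> t) = x t" and xh'_\<xi>: "vector_derivative xh (at (\<xi> t)) = w t" if "t \<in> T" for t
    using xh[OF that] light_front[OF that _ xd[OF that], of xh] xh vector_derivative_at
    by (simp_all add: \<xi>_def w_def)
  have hat_p: "grad_vel (Lhat c L) (xh (\<xi> s)) (vector_derivative xh (at (\<xi> s))) (\<xi> s)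
      = c *\<^sub>R p s - H s *\<^sub>R axis 3 1" if "s \<in> T" for s
  proof -
    have wv: "1 + w s $ 3 > 0" "(c / (1 + w s $ 3)) *\<^sub>R w s = v s"
      using light_front_velocity[OF v3[OF that] c] by (simp_all add: w_def)
    have "s = (\<xi> s + x s $ 3) / c" using c by (simp add: \<xi>_def)
    from grad_vel_Lhat[OF L[OF that, folded wv(2)] wv(1) refl this]
    show ?thesis by (simp add: xh_\<xi>[OF that] xh'_\<xi>[OF that] wv(2) p_def H_def)
  qed
  have hat_pd: "((\<lambda>r. grad_vel (Lhat c L) (xh r) (vector_derivative xh (at r)) r) has_vector_derivative
      (1 / (c - v t $ 3)) *\<^sub>R (c *\<^sub>R p' t - H' t *\<^sub>R axis 3 1)) (at (\<xi> t))" if "t \<in> T" for t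
    using pd[OF that] Hd[OF that]
    by (intro light_front[where f="\<lambda>s. c *\<^sub>R p s - H s *\<^sub>R axis 3 1", OF that hat_p])
      (auto intro!: derivative_eq_intros)
  have "lagrange_eqs L Q x T \<longleftrightarrow> (\<forall>t\<in>T. p' t = Q (x t) (v t) t + G t)"
    using lagrange_eqs_image_iff[where f="\<lambda>t. t" and Q=Q, OF pd[unfolded p_def v_def]]
    by (simp add: G_def v_def)
  also have "\<dots> \<longleftrightarrow> (\<forall>t\<in>T. (1 / (c - v t $ 3)) *\<^sub>R (c *\<^sub>R p' t - H' t *\<^sub>R axis 3 1)
      = Qhat c Q (x t) (w t) (\<xi> t) + grad_pos (Lhat c L) (x t) (w t) (\<xi> t))"
    using lagrange_eq_iff_light_front_eq[OF L v3 c] by (simp add: G_def H'_def w_def \<xi>_def)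
  also have "\<dots> \<longleftrightarrow> lagrange_eqs (Lhat c L) (Qhat c Q) xh (\<xi> ` T)"
    by (subst lagrange_eqs_image_iff[OF hat_pd]) (auto simp: xh_\<xi> xh'_\<xi>)
  finally show ?thesis by (simp add: \<xi>_def)
qed

lemma subluminal_factor_pos:
  fixes v :: "'a::real_inner"
  assumes "norm v < c"
  shows "0 < 1 - (v \<bullet> v) / c\<^sup>2"
proof -
  have c: "c > 0" using norm_ge_zero assms by (rule le_less_trans)
  have "v \<bullet> v < c\<^sup>2"
    using assms by (metis norm_ge_zero power2_norm_eq_inner power_strict_mono zero_less_numeral)
  then show ?thesis
    using c by (simp add: field_simps)
qed

lemma Lag_has_derivative:
  assumes A0: "(A0 has_derivative DA0) (at (t, x))" and A: "(A has_derivative DA) (at (t, x))"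
    and c: "c > 0" and v: "norm v < c"
  shows "((\<lambda>(x,v,t). Lag m q c A0 A x v t) has_derivative
     (\<lambda>(hx,hv,ht). m / sqrt (1 - (v \<bullet> v) / c\<^sup>2) * (v \<bullet> hv)
        - q * (DA0 (ht, hx) - (DA (ht, hx) \<bullet> v + A (t, x) \<bullet> hv) / c))) (at (x, v, t))"
proof -
  have swap: "((\<lambda>p::vec3 \<times> vec3 \<times> real. (snd (snd p), fst p)) has_derivative (\<lambda>h. (snd (snd h), fst h)))
      (at (x, v, t))"
    by (auto intro!: derivative_eq_intros)
  have Lag: "(\<lambda>(x,v,t). Lag m q c A0 A x v t) = (\<lambda>p. - m * c\<^sup>2 * sqrt (1 - (fst (snd p) \<bullet> fst (snd p)) / c\<^sup>2)
      - q * (A0 (snd (snd p), fst p) - A (snd (snd p), fst p) \<bullet> fst (snd p) / c))"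
    by (auto simp: Lag_def fun_eq_iff)
  show ?thesis
    unfolding Lag using subluminal_factor_pos[OF v] c
      has_derivative_compose[OF swap, of A0 DA0] has_derivative_compose[OF swap, of A DA] A0 A
    by (auto intro!: derivative_eq_intros simp: fun_eq_iff field_simps inner_commute power2_eq_square)
qed

lemma Lag_differentiable:
  assumes "A0 differentiable (at (t, x))" and "A differentiable (at (t, x))"
    and c: "c > 0" and v: "norm v < c"
  shows "(\<lambda>(x,v,t). Lag m q c A0 A x v t) differentiable (at (x, v, t))"
proof -
  obtain DA0 DA where "(A0 has_derivative DA0) (at (t, x))" and "(A has_derivative DA) (at (t, x))"
    using assms(1,2) by (auto simp: differentiable_def)
  from Lag_has_derivative[OF this c v] show ?thesis by (rule differentiableI)
qed

lemma grad_vel_Lag: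
  assumes "A0 differentiable (at (t, x))" and "A differentiable (at (t, x))"
    and c: "c > 0" and v: "norm v < c"
  shows "grad_vel (Lag m q c A0 A) x v t = (m / sqrt (1 - (v \<bullet> v) / c\<^sup>2)) *\<^sub>R v + (q / c) *\<^sub>R A (t, x)"
proof -
  obtain DA0 DA where A0: "(A0 has_derivative DA0) (at (t, x))" and A: "(A has_derivative DA) (at (t, x))"
    using assms(1,2) by (auto simp: differentiable_def)
  have z: "DA0 (0, 0) = 0" "DA (0, 0) = 0"
    using linear_0[OF has_derivative_linear[OF A0]] linear_0[OF has_derivative_linear[OF A]]
    by (simp_all add: zero_prod_def)
  show ?thesis
    using grad_vel_by_derivative[OF Lag_has_derivative[OF A0 A c v]] c
    by (simp add: z vec_eq_iff inner_axis)
qed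

lemma Lag_momentum_differentiable:
  assumes A0: "\<And>p. A0 differentiable (at p)" and A: "\<And>p. A differentiable (at p)"
    and c: "c > 0" and T: "open T" and t: "t \<in> T" and v: "\<And>s. s \<in> T \<Longrightarrow> norm (v s) < c"
    and x_diff: "x differentiable (at t)" and v_diff: "v differentiable (at t)"
  shows "(\<lambda>r. grad_vel (Lag m q c A0 A) (x r) (v r) r) differentiable (at t)"
proof -
  define p where "p = (\<lambda>r. (m / sqrt (1 - (v r \<bullet> v r) / c\<^sup>2)) *\<^sub>R v r + (q / c) *\<^sub>R A (r, x r))"
  obtain X DA where X: "(x has_derivative X) (at t)" and DA: "(A has_derivative DA) (at (t, x t))"
    using x_diff A by (meson differentiable_def)
  have "((\<lambda>r. A (r, x r)) has_derivative (\<lambda>h. DA (h, X h))) (at t)"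
    using has_derivative_compose[OF has_derivative_Pair[OF has_derivative_ident X] DA] by simp
  then have A_along: "(\<lambda>r. A (r, x r)) differentiable (at t)"
    by (rule differentiableI)
  have "(\<lambda>r. 1 - v r \<bullet> v r / c\<^sup>2) differentiable (at t)"
    using v_diff c by (auto intro!: derivative_intros)
  then obtain V where V: "((\<lambda>r. 1 - v r \<bullet> v r / c\<^sup>2) has_derivative V) (at t)"
    by (auto simp: differentiable_def)
  have "(\<lambda>r. sqrt (1 - v r \<bullet> v r / c\<^sup>2)) differentiable (at t)"
    using has_derivative_real_sqrt[where g="\<lambda>r. 1 - v r \<bullet> v r / c\<^sup>2", OF _ V]
      subluminal_factor_pos[OF v[OF t]] by (auto intro: differentiableI)
  then have "p differentiable (at t)"
    unfolding p_def using A_along v_diff subluminal_factor_pos[OF v[OF t]] c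
    by (auto intro!: derivative_intros)
  then obtain D where "(p has_derivative D) (at t)"
    by (auto simp: differentiable_def)
  then have "((\<lambda>r. grad_vel (Lag m q c A0 A) (x r) (v r) r) has_derivative D) (at t)"
    by (rule has_derivative_transform_within_open[OF _ T t]) (simp add: p_def grad_vel_Lag A0 A c v)
  then show ?thesis by (rule differentiableI)
qed

theorem proposition10:
  fixes m q c :: real
    and A0 :: "real \<times> vec3 \<Rightarrow> real" and A :: "real \<times> vec3 \<Rightarrow> vec3"
    and Q :: "vec3 \<Rightarrow> vec3 \<Rightarrow> real \<Rightarrow> vec3"
    and T :: "real set" and x xh :: "real \<Rightarrow> vec3"
  assumes "m > 0" and "c > 0"
    and "\<forall>p. A0 differentiable (at p)" and "\<forall>p. A differentiable (at p)"
    and "open T"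
    and "\<forall>t\<in>T. x differentiable (at t)"
    and "\<forall>t\<in>T. (\<lambda>s. vector_derivative x (at s)) differentiable (at t)"
    and "\<forall>t\<in>T. norm (vector_derivative x (at t)) < c"
    and "\<forall>t\<in>T. xh (c * t - x t $ 3) = x t"
  shows "lagrange_eqs (Lag m q c A0 A) Q x T \<longleftrightarrow>
         lagrange_eqs (Lhat c (Lag m q c A0 A)) (Qhat c Q) xh ((\<lambda>t. c * t - x t $ 3) ` T)"
proof (rule lagrange_eqs_light_front_iff)
  show "c > 0" "open T" using assms by auto
  show x: "x differentiable (at t)" and v: "(\<lambda>s. vector_derivative x (at s)) differentiable (at t)"
    and "xh (c * t - x t $ 3) = x t" if "t \<in> T" for t
    using assms that by auto
  have v_lt_c: "norm (vector_derivative x (at t)) < c" if "t \<in> T" for t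
    using assms that by auto
  then show "vector_derivative x (at t) $ 3 < c" if "t \<in> T" for t
    using component_le_norm_cart[of "vector_derivative x (at t)" 3] that by fastforce
  show "((\<lambda>(x, v, t). Lag m q c A0 A x v t) has_derivative
      frechet_derivative (\<lambda>(x, v, t). Lag m q c A0 A x v t) (at (x t, vector_derivative x (at t), t)))
      (at (x t, vector_derivative x (at t), t))" if "t \<in> T" for t
    using Lag_differentiable[OF _ _ \<open>c > 0\<close> v_lt_c[OF that]] assms(3,4) frechet_derivative_works
    by blast
  show "(\<lambda>r. grad_vel (Lag m q c A0 A) (x r) (vector_derivative x (at r)) r) differentiable (at t)"
    if "t \<in> T" for t
    using Lag_momentum_differentiable[OF _ _ \<open>c > 0\<close> \<open>open T\<close> that v_lt_c x[OF that] v[OF that]]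
      assms(3,4) by blast
qed

end
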